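(* Let $D=(V,A,w)$ be a weighted digraph and let $R\in\mathcal{B}(D)$. Then $\mathrm{mac}(D)\ge\frac{w(D)}{4}+\frac{w(R)}{4}$.
   Context: A weighted digraph $D=(V,A,w)$ is a digraph without loops or parallel arcs (opposite arcs allowed) with weights $w:A\to\mathbb{R}_{\ge0}$; $w(H)$ is the total arc weight of a subgraph $H$. For a partition $(X,Y)$ of $V$, $w(X,Y)$ is the total weight of arcs from $X$ to $Y$, and $\mathrm{mac}(D)=\max_{(X,Y)}w(X,Y)$. A subdigraph is connected if its underlying undirected graph is connected. $\mathcal{B}(D)$ denotes the set of bipartite subdigraphs $R$ of $D$ such that for every connected component $R_1$ of $R$ with bipartition $(X_1,Y_1)$, both $X_1$ and $Y_1$ are independent sets in $D$ (no arc of $D$ has both ends in $X_1$, nor both ends in $Y_1$). *)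

theory Defs
  imports Main "HOL-Library.Disjoint_Sets" Complex_Main
begin

text \<open>A weighted digraph: finite vertex set V, arc set A \<subseteq> V \<times> V without loops
 (parallel arcs are impossible since A is a set of pairs; opposite arcs allowed),
 weights w on arcs, nonnegative on A.\<close>
definition weighted_digraph :: "'a set \<Rightarrow> ('a \<times> 'a) set \<Rightarrow> ('a \<times> 'a \<Rightarrow> real) \<Rightarrow> bool" where
  "weighted_digraph V A w \<longleftrightarrow> finite V \<and> A \<subseteq> V \<times> V \<and> (\<forall>v. (v, v) \<notin> A)
     \<and> (\<forall>a\<in>A. w a \<ge> 0)"

definition wt :: "('a \<times> 'a \<Rightarrow> real) \<Rightarrow> ('a \<times> 'a) set \<Rightarrow> real" where
  "wt w B = (\<Sum>a\<in>B. w a)"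

definition cut_weight :: "('a \<times> 'a) set \<Rightarrow> ('a \<times> 'a \<Rightarrow> real) \<Rightarrow> 'a set \<Rightarrow> 'a set \<Rightarrow> real" where
  "cut_weight A w X Y = wt w {(u, v) \<in> A. u \<in> X \<and> v \<in> Y}"

text \<open>mac(D): maximum over partitions (X, Y) of V (X = V - Y; parts may be empty).\<close>
definition mac :: "'a set \<Rightarrow> ('a \<times> 'a) set \<Rightarrow> ('a \<times> 'a \<Rightarrow> real) \<Rightarrow> real" where
  "mac V A w = Max {cut_weight A w X (V - X) | X. X \<subseteq> V}"

definition subdigraph :: "'a set \<Rightarrow> ('a \<times> 'a) set \<Rightarrow> 'a set \<Rightarrow> ('a \<times> 'a) set \<Rightarrow> bool" where
  "subdigraph V A VR AR \<longleftrightarrow> VR \<subseteq> V \<and> AR \<subseteq> A \<and> AR \<subseteq> VR \<times> VR"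

definition independent :: "('a \<times> 'a) set \<Rightarrow> 'a set \<Rightarrow> bool" where
  "independent A S \<longleftrightarrow> (\<forall>u v. (u, v) \<in> A \<longrightarrow> \<not> (u \<in> S \<and> v \<in> S))"

definition components :: "'a set \<Rightarrow> ('a \<times> 'a) set \<Rightarrow> 'a set set" where
  "components VR AR = {{u \<in> VR. (v, u) \<in> (AR \<union> AR\<inverse>)\<^sup>*} | v. v \<in> VR}"

definition is_bipartition :: "('a \<times> 'a) set \<Rightarrow> 'a set \<Rightarrow> 'a set \<Rightarrow> 'a set \<Rightarrow> bool" where
  "is_bipartition AR C X1 Y1 \<longleftrightarrow> X1 \<union> Y1 = C \<and> X1 \<inter> Y1 = {}
     \<and> (\<forall>(u, v)\<in>AR. u \<in> C \<longrightarrow> (u \<in> X1 \<and> v \<in> Y1) \<or> (u \<in> Y1 \<and> v \<in> X1))"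

definition calB :: "'a set \<Rightarrow> ('a \<times> 'a) set \<Rightarrow> ('a set \<times> ('a \<times> 'a) set) set" where
  "calB V A = {(VR, AR). subdigraph V A VR AR \<and>
     (\<forall>C\<in>components VR AR. \<exists>X1 Y1. is_bipartition AR C X1 Y1
        \<and> independent A X1 \<and> independent A Y1)}"

end

theory Submission
  imports Defs
begin

text \<open>Group the vertices into classes: each component of \<open>R\<close> is one class, and each vertex
  outside \<open>R\<close> forms a class of its own. Fix in each component its bipartition \<open>(X\<^sub>1, Y\<^sub>1)\<close>
  and choose, independently and uniformly for every class, whether its \<open>X\<^sub>1\<close>-side goes to \<open>X\<close>
  or to \<open>Y\<close>. An arc inside a class joins the two sides (both sides are independent in \<open>D\<close>),
  so it is cut with probability \<open>1/2\<close>; an arc between classes is cut with probability \<open>1/4\<close>.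
  Since the arcs of \<open>R\<close> lie inside classes, the expected cut is at least
  \<open>w(D)/4 + w(R)/4\<close>, and the maximum cut is at least the average.\<close>

lemma card_subsets_prescribed:
  assumes "finite U" "K \<subseteq> U"
  shows "card {S \<in> Pow U. \<forall>k\<in>K. (k \<in> S) = P k} = 2 ^ (card U - card K)"
proof -
  have "bij_betw (\<lambda>T. T \<union> {k\<in>K. P k}) (Pow (U - K)) {S \<in> Pow U. \<forall>k\<in>K. (k \<in> S) = P k}"
    by (rule bij_betw_byWitness[where f' = "\<lambda>S. S - K"]) (use assms(2) in auto)
  then have "card {S \<in> Pow U. \<forall>k\<in>K. (k \<in> S) = P k} = card (Pow (U - K))"
    by (simp add: bij_betw_same_card)
  also have "\<dots> = 2 ^ (card U - card K)"
    using assms by (simp add: card_Pow card_Diff_subset finite_subset)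
  finally show ?thesis .
qed

lemma real_card_subsets_prescribed:
  assumes "finite U" "K \<subseteq> U"
  shows "real (card {S \<in> Pow U. \<forall>k\<in>K. (k \<in> S) = P k}) = 2 ^ card U / 2 ^ card K"
proof -
  have "card K \<le> card U"
    using assms by (rule card_mono)
  then have "(2::real) ^ (card U - card K) * 2 ^ card K = 2 ^ card U"
    by (simp add: power_add[symmetric])
  then show ?thesis
    using card_subsets_prescribed[OF assms] by (simp add: field_simps)
qed

lemma real_card_switchings_cutting_arc:
  assumes "finite U" "cls u \<in> U" "cls v \<in> U"
    and "cls u = cls v \<Longrightarrow> s u \<noteq> s v"
  shows "real (card {S \<in> Pow U. (cls u \<in> S) = s u \<and> (cls v \<in> S) \<noteq> s v})
           = 2 ^ card U / (if cls u = cls v then 2 else 4)"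
proof (cases "cls u = cls v")
  case True
  then have "{S \<in> Pow U. (cls u \<in> S) = s u \<and> (cls v \<in> S) \<noteq> s v}
               = {S \<in> Pow U. \<forall>k\<in>{cls u}. (k \<in> S) = s u}"
    using assms(4) by auto
  then show ?thesis
    using True real_card_subsets_prescribed[OF assms(1), of "{cls u}"] assms(2) by simp
next
  case False
  define P where "P k = (if k = cls u then s u else \<not> s v)" for k
  have "{S \<in> Pow U. (cls u \<in> S) = s u \<and> (cls v \<in> S) \<noteq> s v}
          = {S \<in> Pow U. \<forall>k\<in>{cls u, cls v}. (k \<in> S) = P k}"
    using False by (auto simp: P_def)
  then show ?thesis
    using False real_card_subsets_prescribed[OF assms(1), of "{cls u, cls v}" P] assms(2,3)
    by simp
qed

lemma weighted_digraph_finite_arcs: "weighted_digraph V A w \<Longrightarrow> finite A"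
  unfolding weighted_digraph_def by (meson finite_SigmaI finite_subset)

lemma cut_weight_le_mac:
  assumes "finite V" "X \<subseteq> V"
  shows "cut_weight A w X (V - X) \<le> mac V A w"
proof -
  have "{cut_weight A w Y (V - Y) | Y. Y \<subseteq> V} = (\<lambda>Y. cut_weight A w Y (V - Y)) ` Pow V"
    by auto
  then have "finite {cut_weight A w Y (V - Y) | Y. Y \<subseteq> V}"
    using assms(1) by simp
  then show ?thesis
    unfolding mac_def by (rule Max_ge) (use assms(2) in auto)
qed

lemma cut_weight_complement_eq_sum:
  assumes "finite A" "A \<subseteq> V \<times> V"
  shows "cut_weight A w X (V - X) = (\<Sum>a\<in>A. if fst a \<in> X \<and> snd a \<notin> X then w a else 0)"
proof -
  have "{(u, v) \<in> A. u \<in> X \<and> v \<in> V - X} = {a \<in> A. fst a \<in> X \<and> snd a \<notin> X}"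
    using assms(2) by auto
  then show ?thesis
    unfolding cut_weight_def wt_def
    by (simp add: sum.inter_filter[OF assms(1)])
qed

lemma mac_ge_switching_average:
  fixes cls :: "'a \<Rightarrow> 'b" and s :: "'a \<Rightarrow> bool"
  assumes D: "weighted_digraph V A w"
    and alternating: "\<And>u v. (u, v) \<in> A \<Longrightarrow> cls u = cls v \<Longrightarrow> s u \<noteq> s v"
  shows "wt w A / 4 + wt w {(u, v) \<in> A. cls u = cls v} / 4 \<le> mac V A w"
proof -
  have finV: "finite V" and AV: "A \<subseteq> V \<times> V"
    using D unfolding weighted_digraph_def by auto
  have finA: "finite A"
    using D by (rule weighted_digraph_finite_arcs)
  define U where "U = cls ` V"
  define n where "n = card U"
  have finU: "finite U"
    using finV by (simp add: U_def)
  define X where "X S = {v \<in> V. (cls v \<in> S) = s v}" for S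
  define cuts where
    "cuts a = {S \<in> Pow U. (cls (fst a) \<in> S) = s (fst a) \<and> (cls (snd a) \<in> S) \<noteq> s (snd a)}"
    for a
  have card_cuts:
    "real (card (cuts a)) = 2 ^ n / (if cls (fst a) = cls (snd a) then 2 else 4)"
    if "a \<in> A" for a
    unfolding cuts_def n_def
    using that AV alternating[of "fst a" "snd a"]
    by (intro real_card_switchings_cutting_arc finU) (auto simp: U_def)
  have cut_iff: "fst a \<in> X S \<and> snd a \<notin> X S \<longleftrightarrow> S \<in> cuts a" if "a \<in> A" "S \<in> Pow U" for a S
    using that AV by (auto simp: X_def cuts_def)
  have "2 ^ n * mac V A w = (\<Sum>S\<in>Pow U. mac V A w)"
    using finU by (simp add: card_Pow n_def)
  also have "\<dots> \<ge> (\<Sum>S\<in>Pow U. cut_weight A w (X S) (V - X S))"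
    by (intro sum_mono cut_weight_le_mac finV) (auto simp: X_def)
  also have "(\<Sum>S\<in>Pow U. cut_weight A w (X S) (V - X S))
      = (\<Sum>S\<in>Pow U. \<Sum>a\<in>A. if S \<in> cuts a then w a else 0)"
    by (intro sum.cong refl) (simp add: cut_weight_complement_eq_sum[OF finA AV] cut_iff)
  also have "\<dots> = (\<Sum>a\<in>A. w a * real (card (cuts a)))"
  proof (subst sum.swap, intro sum.cong refl)
    fix a
    have "cuts a \<subseteq> Pow U"
      by (auto simp: cuts_def)
    then show "(\<Sum>S\<in>Pow U. if S \<in> cuts a then w a else 0) = w a * real (card (cuts a))"
      using finU by (simp add: sum.If_cases Int_absorb1)
  qed
  also have "\<dots> = (\<Sum>a\<in>A. 2 ^ n * (w a / 4 + (if cls (fst a) = cls (snd a) then w a / 4 else 0)))"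
    by (intro sum.cong refl) (auto simp: card_cuts)
  also have "\<dots> = 2 ^ n * (wt w A / 4 + wt w {(u, v) \<in> A. cls u = cls v} / 4)"
  proof -
    have "wt w {(u, v) \<in> A. cls u = cls v} = (\<Sum>a\<in>A. if cls (fst a) = cls (snd a) then w a else 0)"
      unfolding wt_def sum.inter_filter[OF finA, symmetric] by (rule sum.cong) auto
    then show ?thesis
      unfolding wt_def
      by (simp add: sum_distrib_left sum.distrib sum_divide_distrib distrib_left
          if_distrib[of "\<lambda>x. x / 4"] cong: if_cong)
  qed
  finally show ?thesis
    by simp
qed

definition component_of :: "'a set \<Rightarrow> ('a \<times> 'a) set \<Rightarrow> 'a \<Rightarrow> 'a set" where
  "component_of VR AR v = {u \<in> VR. (v, u) \<in> (AR \<union> AR\<inverse>)\<^sup>*}"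

lemma component_of_in_components: "v \<in> VR \<Longrightarrow> component_of VR AR v \<in> components VR AR"
  unfolding components_def component_of_def by auto

lemma self_in_component_of: "v \<in> VR \<Longrightarrow> v \<in> component_of VR AR v"
  unfolding component_of_def by simp

lemma component_of_eq:
  assumes "u \<in> VR" "v \<in> component_of VR AR u"
  shows "component_of VR AR v = component_of VR AR u"
proof -
  have uv: "(u, v) \<in> (AR \<union> AR\<inverse>)\<^sup>*"
    using assms(2) by (simp add: component_of_def)
  have "(v, u) \<in> ((AR \<union> AR\<inverse>)\<inverse>)\<^sup>*"
    using uv by (simp add: rtrancl_converseI)
  moreover have "(AR \<union> AR\<inverse>)\<inverse> = AR \<union> AR\<inverse>"
    by auto
  ultimately have "(v, u) \<in> (AR \<union> AR\<inverse>)\<^sup>*"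
    by simp
  with uv show ?thesis
    unfolding component_of_def by (auto intro: rtrancl_trans)
qed

lemma component_of_arc:
  assumes "AR \<subseteq> VR \<times> VR" "(u, v) \<in> AR"
  shows "component_of VR AR v = component_of VR AR u"
  using assms by (intro component_of_eq) (auto simp: component_of_def)

text \<open>Vertices outside \<open>VR\<close> are put into singleton classes; they cannot collide with a
  component or with each other, since \<open>D\<close> has no loops.\<close>

lemma calB_alternating_classes:
  assumes "(VR, AR) \<in> calB V A" "\<And>v. (v, v) \<notin> A"
  obtains cls :: "'a \<Rightarrow> 'a set" and s :: "'a \<Rightarrow> bool"
  where "\<And>u v. (u, v) \<in> A \<Longrightarrow> cls u = cls v \<Longrightarrow> s u \<noteq> s v"
    and "\<And>u v. (u, v) \<in> AR \<Longrightarrow> cls u = cls v"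
proof -
  have ARVR: "AR \<subseteq> VR \<times> VR"
    using assms(1) unfolding calB_def subdigraph_def by auto
  have "\<forall>C\<in>components VR AR. \<exists>X1 Y1. is_bipartition AR C X1 Y1
          \<and> independent A X1 \<and> independent A Y1"
    using assms(1) unfolding calB_def by auto
  then obtain X1 Y1 where bip: "\<And>C. C \<in> components VR AR \<Longrightarrow>
      is_bipartition AR C (X1 C) (Y1 C) \<and> independent A (X1 C) \<and> independent A (Y1 C)"
    by metis
  let ?C = "component_of VR AR"
  define cls where "cls v = (if v \<in> VR then ?C v else {v})" for v
  define s where "s v = (v \<in> X1 (?C v))" for v
  show thesis
  proof
    fix u v
    assume uv: "(u, v) \<in> A" and same: "cls u = cls v"
    have "u \<noteq> v"
      using uv assms(2) by auto
    then have VR: "u \<in> VR" "v \<in> VR"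
      using same self_in_component_of[of u VR AR] self_in_component_of[of v VR AR]
      by (auto simp: cls_def split: if_splits)
    then have C: "?C v = ?C u"
      using same by (simp add: cls_def)
    let ?K = "?C u"
    have K: "is_bipartition AR ?K (X1 ?K) (Y1 ?K)" "independent A (X1 ?K)" "independent A (Y1 ?K)"
      using bip[OF component_of_in_components[OF VR(1)]] by auto
    have "u \<in> X1 ?K \<union> Y1 ?K" "v \<in> X1 ?K \<union> Y1 ?K" "X1 ?K \<inter> Y1 ?K = {}"
      using K(1) C self_in_component_of[OF VR(1)] self_in_component_of[OF VR(2)]
      unfolding is_bipartition_def by auto
    moreover have "\<not> (u \<in> X1 ?K \<and> v \<in> X1 ?K)" "\<not> (u \<in> Y1 ?K \<and> v \<in> Y1 ?K)"
      using K(2,3) uv unfolding independent_def by auto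
    ultimately show "s u \<noteq> s v"
      using C by (auto simp: s_def)
  next
    fix u v
    assume "(u, v) \<in> AR"
    then show "cls u = cls v"
      using ARVR component_of_arc[OF ARVR] by (auto simp: cls_def)
  qed
qed

theorem mainTheorem4:
  fixes V :: "'a set" and A :: "('a \<times> 'a) set" and w :: "'a \<times> 'a \<Rightarrow> real"
    and VR :: "'a set" and AR :: "('a \<times> 'a) set"
  assumes "weighted_digraph V A w"
    and "(VR, AR) \<in> calB V A"
  shows "mac V A w \<ge> wt w A / 4 + wt w AR / 4"
proof -
  have loopless: "\<And>v. (v, v) \<notin> A" and nonneg: "\<And>a. a \<in> A \<Longrightarrow> w a \<ge> 0"
    using assms(1) unfolding weighted_digraph_def by auto
  have "AR \<subseteq> A"
    using assms(2) unfolding calB_def subdigraph_def by auto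
  obtain cls :: "'a \<Rightarrow> 'a set" and s :: "'a \<Rightarrow> bool" where
    alternating: "\<And>u v. (u, v) \<in> A \<Longrightarrow> cls u = cls v \<Longrightarrow> s u \<noteq> s v" and
    inside: "\<And>u v. (u, v) \<in> AR \<Longrightarrow> cls u = cls v"
    using calB_alternating_classes[OF assms(2) loopless] by blast
  have "finite A"
    using assms(1) by (rule weighted_digraph_finite_arcs)
  then have "finite {(u, v) \<in> A. cls u = cls v}"
    by (rule rev_finite_subset) auto
  moreover have "AR \<subseteq> {(u, v) \<in> A. cls u = cls v}"
    using \<open>AR \<subseteq> A\<close> inside by auto
  ultimately have "wt w AR \<le> wt w {(u, v) \<in> A. cls u = cls v}"
    unfolding wt_def using nonneg by (intro sum_mono2) auto
  moreover have "wt w A / 4 + wt w {(u, v) \<in> A. cls u = cls v} / 4 \<le> mac V A w"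
    using assms(1) alternating by (rule mac_ge_switching_average)
  ultimately show ?thesis
    by linarith
qed

end
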